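(* The semigroup $Q_3(sl_3(\mathbb{C}))$ of BZ triangles is generated by the eight elements $X, Y, P_{12},P_{23},P_{31},P_{21},P_{32},P_{13}$, where $X$ is the unique element with boundary weights $(\omega_1,\omega_1,\omega_1)$, $Y$ the unique element with boundary weights $(\omega_2,\omega_2,\omega_2)$, and for distinct $i,j\in\{1,2,3\}$, $P_{ij}$ is the unique element whose boundary weight on side $i$ is $\omega_1$, on side $j$ is $\omega_2$, and on the remaining side is $0$. The only relation among them is $X+Y=P_{12}+P_{23}+P_{31}$; that is, $\mathbb{C}[Q_3(sl_3(\mathbb{C}))]\cong\mathbb{C}[x,y,p_{12},p_{23},p_{31},p_{21},p_{32},p_{13}]/(xy-p_{12}p_{23}p_{31})$.
   Context: A Berenstein–Zelevinsky (BZ) triangle for $sl_3(\mathbb{C})$ is a $9$-tuple of nonnegative integers $(a,b,c,d,e,f,g,h,i)$ placed on the vertices of a triangular diagram with rows $a$; $b\ c$; $d\ e$; $f\ g\ h\ i$, so that the sides of the big triangle, oriented counterclockwise, read: side 1 $=(a,b,d,f)$, side 2 $=(f,g,h,i)$, side 3 $=(i,e,c,a)$, and $b,c,e,h,g,d$ (in this cyclic order) form a central hexagon. The entries must satisfy the hexagon conditions $b+c=g+h$, $c+e=d+g$, $e+h=b+d$. The boundary weight of a side read as $(x_1,x_2,x_3,x_4)$ is $(x_1+x_2)\omega_1+(x_3+x_4)\omega_2$, with $\omega_1,\omega_2$ the fundamental weights of $sl_3(\mathbb{C})$. $Q_3(sl_3(\mathbb{C}))$ is the semigroup of BZ triangles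 under entrywise addition. *)

theory Defs
  imports Main
begin

text \<open>The nine vertices of the BZ diagram: rows a; b c; d e; f g h i.\<close>
datatype vtx = Va | Vb | Vc | Vd | Ve | Vf | Vg | Vh | Vi

type_synonym tri = "vtx \<Rightarrow> nat"

definition hexagon :: "tri \<Rightarrow> bool" where
  "hexagon t \<longleftrightarrow> t Vb + t Vc = t Vg + t Vh \<and> t Vc + t Ve = t Vd + t Vg
                 \<and> t Ve + t Vh = t Vb + t Vd"

definition BZ :: "tri set" where
  "BZ = {t. hexagon t}"

text \<open>A weight m1*omega1 + m2*omega2 is encoded as the pair (m1, m2).\<close>
type_synonym wt = "nat \<times> nat"

definition side_wt :: "nat \<Rightarrow> nat \<Rightarrow> nat \<Rightarrow> nat \<Rightarrow> wt" where
  "side_wt x1 x2 x3 x4 = (x1 + x2, x3 + x4)"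

definition bweights :: "tri \<Rightarrow> wt \<times> wt \<times> wt" where
  "bweights t = (side_wt (t Va) (t Vb) (t Vd) (t Vf),
                 side_wt (t Vf) (t Vg) (t Vh) (t Vi),
                 side_wt (t Vi) (t Ve) (t Vc) (t Va))"

definition \<omega>1 :: wt where "\<omega>1 = (1, 0)"
definition \<omega>2 :: wt where "\<omega>2 = (0, 1)"
definition \<omega>0 :: wt where "\<omega>0 = (0, 0)"

datatype gen = GX | GY | P12 | P23 | P31 | P21 | P32 | P13

fun gen_wts :: "gen \<Rightarrow> wt \<times> wt \<times> wt" where
  "gen_wts GX  = (\<omega>1, \<omega>1, \<omega>1)"
| "gen_wts GY  = (\<omega>2, \<omega>2, \<omega>2)"
| "gen_wts P12 = (\<omega>1, \<omega>2, \<omega>0)"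
| "gen_wts P23 = (\<omega>0, \<omega>1, \<omega>2)"
| "gen_wts P31 = (\<omega>2, \<omega>0, \<omega>1)"
| "gen_wts P21 = (\<omega>2, \<omega>1, \<omega>0)"
| "gen_wts P32 = (\<omega>0, \<omega>2, \<omega>1)"
| "gen_wts P13 = (\<omega>1, \<omega>0, \<omega>2)"

definition gen_elem :: "gen \<Rightarrow> tri" where
  "gen_elem g = (THE t. t \<in> BZ \<and> bweights t = gen_wts g)"

definition eval :: "(gen \<Rightarrow> nat) \<Rightarrow> tri" where
  "eval c = (\<lambda>v. \<Sum>g\<in>UNIV. c g * gen_elem g v)"

definition unit_vec :: "gen \<Rightarrow> gen \<Rightarrow> nat" where
  "unit_vec g = (\<lambda>h. if h = g then 1 else 0)"

definition addv :: "(gen \<Rightarrow> nat) \<Rightarrow> (gen \<Rightarrow> nat) \<Rightarrow> gen \<Rightarrow> nat" where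
  "addv c d = (\<lambda>h. c h + d h)"

inductive rel :: "(gen \<Rightarrow> nat) \<Rightarrow> (gen \<Rightarrow> nat) \<Rightarrow> bool" where
  base: "rel (addv (unit_vec GX) (unit_vec GY))
             (addv (unit_vec P12) (addv (unit_vec P23) (unit_vec P31)))"
| refl: "rel c c"
| sym: "rel c d \<Longrightarrow> rel d c"
| trans: "rel c d \<Longrightarrow> rel d e \<Longrightarrow> rel c e"
| add: "rel c d \<Longrightarrow> rel (addv c e) (addv d e)"

end

theory Submission
  imports Defs
begin

text \<open>Each generator is a 0/1 triangle: X occupies b, e, g; Y occupies c, d, h; P12, P23, P31
  occupy the opposite hexagon pairs b h, c g, d e; and P21, P32, P13 are the corners f, i, a.
  Hence the coordinates of a combination are the corner coefficients together with
  b = X + P12, h = Y + P12, c = Y + P23, g = X + P23, d = Y + P31, e = X + P31, and every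
  solution of the hexagon conditions has such a decomposition. The relation X + Y = P12 + P23 + P31
  trades min(X, Y) copies of X + Y away, and after this the coefficients are recovered from the
  triangle (X - Y = g - c), so two combinations with the same value are related.\<close>

lemma tri_eq_iff:
  "(t::tri) = s \<longleftrightarrow> t Va = s Va \<and> t Vb = s Vb \<and> t Vc = s Vc \<and> t Vd = s Vd \<and> t Ve = s Ve
     \<and> t Vf = s Vf \<and> t Vg = s Vg \<and> t Vh = s Vh \<and> t Vi = s Vi"
proof
  show "t = s" if "t Va = s Va \<and> t Vb = s Vb \<and> t Vc = s Vc \<and> t Vd = s Vd \<and> t Ve = s Ve
     \<and> t Vf = s Vf \<and> t Vg = s Vg \<and> t Vh = s Vh \<and> t Vi = s Vi"
  proof
    fix v show "t v = s v" using that by (cases v) simp_all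
  qed
qed simp

lemma gen_fun_eq_iff:
  "(c::gen \<Rightarrow> nat) = d \<longleftrightarrow> c GX = d GX \<and> c GY = d GY \<and> c P12 = d P12 \<and> c P23 = d P23
     \<and> c P31 = d P31 \<and> c P21 = d P21 \<and> c P32 = d P32 \<and> c P13 = d P13"
proof
  show "c = d" if "c GX = d GX \<and> c GY = d GY \<and> c P12 = d P12 \<and> c P23 = d P23
     \<and> c P31 = d P31 \<and> c P21 = d P21 \<and> c P32 = d P32 \<and> c P13 = d P13"
  proof
    fix h show "c h = d h" using that by (cases h) simp_all
  qed
qed simp

lemma UNIV_gen: "(UNIV::gen set) = {GX, GY, P12, P23, P31, P21, P32, P13}"
  by (auto intro: gen.exhaust)

fun gen_tri :: "gen \<Rightarrow> tri" where
  "gen_tri GX  = (\<lambda>v. if v \<in> {Vb, Ve, Vg} then 1 else 0)"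
| "gen_tri GY  = (\<lambda>v. if v \<in> {Vc, Vd, Vh} then 1 else 0)"
| "gen_tri P12 = (\<lambda>v. if v \<in> {Vb, Vh} then 1 else 0)"
| "gen_tri P23 = (\<lambda>v. if v \<in> {Vc, Vg} then 1 else 0)"
| "gen_tri P31 = (\<lambda>v. if v \<in> {Vd, Ve} then 1 else 0)"
| "gen_tri P21 = (\<lambda>v. if v = Vf then 1 else 0)"
| "gen_tri P32 = (\<lambda>v. if v = Vi then 1 else 0)"
| "gen_tri P13 = (\<lambda>v. if v = Va then 1 else 0)"

lemma BZ_gen_wts_iff: "t \<in> BZ \<and> bweights t = gen_wts g \<longleftrightarrow> t = gen_tri g"
  by (cases g)
     (auto simp: tri_eq_iff BZ_def hexagon_def bweights_def side_wt_def \<omega>1_def \<omega>2_def \<omega>0_def)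

lemma gen_elem_eq_gen_tri: "gen_elem g = gen_tri g"
  unfolding gen_elem_def BZ_gen_wts_iff by simp

lemma eval_apply:
  "eval c Va = c P13" "eval c Vb = c GX + c P12" "eval c Vc = c GY + c P23"
  "eval c Vd = c GY + c P31" "eval c Ve = c GX + c P31" "eval c Vf = c P21"
  "eval c Vg = c GX + c P23" "eval c Vh = c GY + c P12" "eval c Vi = c P32"
  by (simp_all add: eval_def UNIV_gen gen_elem_eq_gen_tri)

lemma eval_addv: "eval (addv c d) = (\<lambda>v. eval c v + eval d v)"
  by (simp add: eval_def addv_def sum.distrib distrib_right)

lemma eval_in_BZ: "eval c \<in> BZ"
  by (simp add: BZ_def hexagon_def eval_apply)

lemma rel_imp_eval_eq: "rel c d \<Longrightarrow> eval c = eval d"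
proof (induction rule: rel.induct)
  case base
  show ?case by (simp add: tri_eq_iff eval_apply eval_addv unit_vec_def)
next
  case (add c d e)
  then show ?case by (simp add: eval_addv)
qed simp_all

text \<open>Replace n copies of X + Y by P12 + P23 + P31; subtraction truncates at zero.\<close>
definition exchange :: "(gen \<Rightarrow> nat) \<Rightarrow> nat \<Rightarrow> gen \<Rightarrow> nat" where
  "exchange c n = (\<lambda>h. if h \<in> {GX, GY} then c h - n
                       else if h \<in> {P12, P23, P31} then c h + n else c h)"

lemma exchange_0: "exchange c 0 = c"
  by (simp add: exchange_def fun_eq_iff)

lemma exchange_Suc: "exchange c (Suc n) = exchange (exchange c n) 1"
  by (simp add: exchange_def fun_eq_iff)

lemma rel_exchange_1:
  assumes "1 \<le> c GX" "1 \<le> c GY"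
  shows "rel c (exchange c 1)"
proof -
  define rest where "rest = c (GX := c GX - 1, GY := c GY - 1)"
  have "c = addv (addv (unit_vec GX) (unit_vec GY)) rest"
    using assms by (simp add: gen_fun_eq_iff rest_def addv_def unit_vec_def)
  moreover have "exchange c 1 = addv (addv (unit_vec P12) (addv (unit_vec P23) (unit_vec P31))) rest"
    by (simp add: gen_fun_eq_iff exchange_def rest_def addv_def unit_vec_def)
  ultimately show ?thesis
    using rel.add[OF rel.base] by simp
qed

lemma rel_exchange: "n \<le> c GX \<Longrightarrow> n \<le> c GY \<Longrightarrow> rel c (exchange c n)"
proof (induction n)
  case 0
  then show ?case by (simp add: exchange_0 rel.refl)
next
  case (Suc n)
  then have "rel (exchange c n) (exchange c (Suc n))"
    unfolding exchange_Suc by (intro rel_exchange_1) (simp_all add: exchange_def)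
  with Suc show ?case
    by (meson Suc_leD rel.trans)
qed

definition reduced :: "(gen \<Rightarrow> nat) \<Rightarrow> bool" where
  "reduced c \<longleftrightarrow> c GX = 0 \<or> c GY = 0"

definition reduce :: "(gen \<Rightarrow> nat) \<Rightarrow> gen \<Rightarrow> nat" where
  "reduce c = exchange c (min (c GX) (c GY))"

lemma reduced_reduce: "reduced (reduce c)"
  by (auto simp: reduced_def reduce_def exchange_def)

lemma rel_reduce: "rel c (reduce c)"
  unfolding reduce_def by (rule rel_exchange) simp_all

lemma eval_inj_on_reduced:
  assumes "reduced c" "reduced d" "eval c = eval d"
  shows "c = d"
proof -
  have "eval c v = eval d v" for v
    using assms(3) by simp
  from this[of Va] this[of Vb] this[of Vc] this[of Vd] this[of Ve]
       this[of Vf] this[of Vg] this[of Vh] this[of Vi]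
  show ?thesis
    using assms(1,2) unfolding eval_apply gen_fun_eq_iff reduced_def by arith
qed

lemma eval_eq_imp_rel:
  assumes "eval c = eval d"
  shows "rel c d"
proof -
  have "eval (reduce c) = eval (reduce d)"
    using assms rel_imp_eval_eq[OF rel_reduce] by metis
  then have "reduce c = reduce d"
    by (intro eval_inj_on_reduced reduced_reduce)
  then show ?thesis
    using rel_reduce rel.sym rel.trans by metis
qed

text \<open>The normal-form coefficients of a triangle: X - Y = g - c, and X, Y, P23 are
  determined by g and c once min(X, Y) = 0.\<close>
definition coeffs :: "tri \<Rightarrow> gen \<Rightarrow> nat" where
  "coeffs t = (\<lambda>h. case h of
       GX \<Rightarrow> t Vg - t Vc | GY \<Rightarrow> t Vc - t Vg
     | P12 \<Rightarrow> t Vb - (t Vg - t Vc) | P23 \<Rightarrow> min (t Vc) (t Vg) | P31 \<Rightarrow> t Ve - (t Vg - t Vc)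
     | P21 \<Rightarrow> t Vf | P32 \<Rightarrow> t Vi | P13 \<Rightarrow> t Va)"

lemma eval_coeffs: "t \<in> BZ \<Longrightarrow> eval (coeffs t) = t"
  unfolding BZ_def hexagon_def tri_eq_iff eval_apply coeffs_def by simp arith

lemma range_eval: "range eval = BZ"
proof
  show "range eval \<subseteq> BZ" using eval_in_BZ by blast
  show "BZ \<subseteq> range eval" using eval_coeffs by (metis rangeI subsetI)
qed

theorem mainTheorem4:
  shows "(\<forall>g. \<exists>!t. t \<in> BZ \<and> bweights t = gen_wts g)
       \<and> range eval = BZ
       \<and> (\<forall>c d. eval c = eval d \<longleftrightarrow> rel c d)"
proof (intro conjI allI)
  show "\<exists>!t. t \<in> BZ \<and> bweights t = gen_wts g" for g
    unfolding BZ_gen_wts_iff by simp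
  show "range eval = BZ"
    by (rule range_eval)
  show "eval c = eval d \<longleftrightarrow> rel c d" for c d
    using eval_eq_imp_rel rel_imp_eval_eq by blast
qed

end
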